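(* Let $s_0,\dots,s_m\in\Sigma^n$ be strings such that $s_{i+1}=ICR(s_i)$ for all $0\le i<m$. Then \[P(H(s_0)) - P(H(s_m)) \equiv \sum_{i=0}^{m-1} e_{s_i[0]} \mod K.\]
   Context: Let $k\ge 1$ be an integer, $\Sigma=\{0,1,\dots,k-1\}$ with arithmetic on symbols taken modulo $k$, and $n\ge 1$. For $s\in\Sigma^n$ write $s=s[0]s[1]\cdots s[n-1]$. The histogram of a string $s$ is $H(s):\Sigma\to\mathbb{Z}$, $H(s)(c)=$ number of occurrences of $c$ in $s$. For $b\in\Sigma$, $e_b:\Sigma\to\mathbb{Z}$ is the indicator function of $b$. $K:\Sigma\to\mathbb{Z}$ is the constant function $1$. For $H:\Sigma\to\mathbb{Z}$, its partial sum is $P(H):\Sigma\to\mathbb{Z}$, $P(H)(i)=\sum_{j=0}^{i}H(j)$. For $F,G:\Sigma\to\mathbb{Z}$, $F\equiv G \mod K$ means $F-G$ is an integer multiple of $K$. The incremented cycle register rule is $ICR(s)=s[1]s[2]\cdots s[n-1](s[0]+1)$. *)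

theory Defs
  imports Main
begin

text \<open>Alphabet Sigma = {0..<k} (as naturals), strings = lists over Sigma.
  Functions Sigma -> Z are represented as nat => int, only values on {0..<k} matter.\<close>

definition hist :: "nat list \<Rightarrow> nat \<Rightarrow> int" where
  "hist s c = int (count_list s c)"

definition ind :: "nat \<Rightarrow> nat \<Rightarrow> int" where
  "ind b c = (if c = b then 1 else 0)"

definition psum :: "(nat \<Rightarrow> int) \<Rightarrow> nat \<Rightarrow> int" where
  "psum H i = (\<Sum>j\<le>i. H j)"

text \<open>F == G mod K on Sigma: F - G is an integer multiple of the constant function 1.\<close>
definition congK :: "nat \<Rightarrow> (nat \<Rightarrow> int) \<Rightarrow> (nat \<Rightarrow> int) \<Rightarrow> bool" where
  "congK k F G = (\<exists>c::int. \<forall>i<k. F i - G i = c)"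

definition ICR :: "nat \<Rightarrow> nat list \<Rightarrow> nat list" where
  "ICR k s = tl s @ [(hd s + 1) mod k]"

end

theory Submission
  imports Defs
begin

(* One ICR step removes the first symbol a from the histogram and adds (a + 1) mod k, so the
   partial sums change by the step functions [a \<le> c] - [(a + 1) mod k \<le> c].  Modulo the
   constant function this equals the indicator of a: exactly when a + 1 < k, and up to the
   constant -1 in the wrap-around case a = k - 1.  Summing these one-step congruences along the
   sequence telescopes to the claim. *)

lemma congK_sum:
  assumes "\<And>i. i \<in> A \<Longrightarrow> congK k (F i) (G i)"
  shows "congK k (\<lambda>c. \<Sum>i\<in>A. F i c) (\<lambda>c. \<Sum>i\<in>A. G i c)"
proof -
  obtain d where "\<And>i c. i \<in> A \<Longrightarrow> c < k \<Longrightarrow> F i c - G i c = d i"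
    using assms unfolding congK_def by metis
  then have "\<forall>c<k. (\<Sum>i\<in>A. F i c) - (\<Sum>i\<in>A. G i c) = (\<Sum>i\<in>A. d i)"
    by (simp add: sum_subtractf[symmetric])
  then show ?thesis
    unfolding congK_def by blast
qed

lemma psum_diff: "psum (\<lambda>c. F c - G c) i = psum F i - psum G i"
  unfolding psum_def by (simp add: sum_subtractf)

lemma psum_add: "psum (\<lambda>c. F c + G c) i = psum F i + psum G i"
  unfolding psum_def by (simp add: sum.distrib)

lemma psum_ind: "psum (ind a) c = (if a \<le> c then 1 else 0)"
  unfolding psum_def ind_def by (simp add: sum.delta)

lemma hist_ICR:
  assumes "s \<noteq> []"
  shows "hist (ICR k s) = (\<lambda>c. hist s c - ind (hd s) c + ind ((hd s + 1) mod k) c)"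
  using assms unfolding hist_def ICR_def ind_def by (cases s) auto

lemma congK_psum_ind_succ:
  assumes "a < k"
  shows "congK k (\<lambda>c. psum (ind a) c - psum (ind ((a + 1) mod k)) c) (ind a)"
proof (cases "a + 1 < k")
  case True
  then have "\<forall>c<k. psum (ind a) c - psum (ind ((a + 1) mod k)) c - ind a c = 0"
    by (auto simp: psum_ind ind_def)
  then show ?thesis
    unfolding congK_def by blast
next
  case False
  with assms have "a + 1 = k"
    by simp
  then have "\<forall>c<k. psum (ind a) c - psum (ind ((a + 1) mod k)) c - ind a c = -1"
    by (auto simp: psum_ind ind_def)
  then show ?thesis
    unfolding congK_def by blast
qed

lemma congK_psum_hist_ICR:
  assumes "s \<noteq> []" and "set s \<subseteq> {..<k}"
  shows "congK k (\<lambda>c. psum (hist s) c - psum (hist (ICR k s)) c) (ind (hd s))"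
proof -
  have "hd s < k"
    using assms by (auto dest: hd_in_set)
  moreover have "psum (hist s) c - psum (hist (ICR k s)) c
      = psum (ind (hd s)) c - psum (ind ((hd s + 1) mod k)) c" for c
    using assms(1) by (simp add: hist_ICR psum_diff psum_add)
  ultimately show ?thesis
    using congK_psum_ind_succ by presburger
qed

theorem lemma2:
  fixes k n m :: nat and s :: "nat \<Rightarrow> nat list"
  assumes "k \<ge> 1" and "n \<ge> 1"
    and "\<forall>i\<le>m. length (s i) = n \<and> set (s i) \<subseteq> {..<k}"
    and "\<forall>i<m. s (Suc i) = ICR k (s i)"
  shows "congK k (\<lambda>c. psum (hist (s 0)) c - psum (hist (s m)) c)
                 (\<lambda>c. \<Sum>i<m. ind (s i ! 0) c)"
proof -
  have "congK k (\<lambda>c. psum (hist (s i)) c - psum (hist (s (Suc i))) c) (ind (s i ! 0))"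
    if "i < m" for i
  proof -
    have "s i \<noteq> []" and "set (s i) \<subseteq> {..<k}"
      using assms(2,3) \<open>i < m\<close> by (auto dest!: spec[of _ i])
    then show ?thesis
      using congK_psum_hist_ICR assms(4) \<open>i < m\<close> by (simp add: hd_conv_nth)
  qed
  then have "congK k (\<lambda>c. \<Sum>i<m. psum (hist (s i)) c - psum (hist (s (Suc i))) c)
                     (\<lambda>c. \<Sum>i<m. ind (s i ! 0) c)"
    by (intro congK_sum) simp
  moreover have "(\<Sum>i<m. psum (hist (s i)) c - psum (hist (s (Suc i))) c)
      = psum (hist (s 0)) c - psum (hist (s m)) c" for c
    by (rule sum_lessThan_telescope')
  ultimately show ?thesis
    by simp
qed

end
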